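(* For any two $n$-dimensional simplices $\triangle,\triangle'\subset\mathbb{R}^n$, $$\#\operatorname{vert}(\triangle\cap\triangle')\le\binom{2n+2}{n+2}.$$
   Context: $\operatorname{vert}(X)$ denotes the vertex set of a polytope $X$. *)

theory Defs
  imports "HOL-Analysis.Analysis"
begin

definition vert :: "'a::real_vector set \<Rightarrow> 'a set" where
  "vert X = {v. v extreme_point_of X}"

end

theory Submission
  imports Defs
begin

text \<open>An \<open>n\<close>-simplex in \<open>\<real>\<^sup>n\<close> is cut out by \<open>n + 1\<close> closed halfspaces, one for each facet,
so \<open>\<triangle> \<inter> \<triangle>'\<close> is cut out by at most \<open>2n + 2\<close> linear inequalities. At a vertex of such a
polyhedron the normals of the tight inequalities span \<open>\<real>\<^sup>n\<close>: otherwise the vertex could be moved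
in both directions orthogonal to them without leaving the polyhedron. Hence some \<open>n\<close> tight
inequalities have linearly independent normals, and they determine the vertex. This injects the
vertices into the \<open>n\<close>-element sets of inequalities, of which there are
\<open>(2n+2 choose n) = (2n+2 choose n+2)\<close>.\<close>

definition halfspace_Inter :: "('a::real_inner \<times> real) set \<Rightarrow> 'a set" where
  "halfspace_Inter H = {x. \<forall>h\<in>H. fst h \<bullet> x \<le> snd h}"

definition tight_constraints :: "('a::real_inner \<times> real) set \<Rightarrow> 'a \<Rightarrow> ('a \<times> real) set" where
  "tight_constraints H v = {h\<in>H. fst h \<bullet> v = snd h}"

lemma not_extreme_point_of_symmetric_pair:
  fixes x d :: "'a::real_vector"
  assumes "x - d \<in> S" "x + d \<in> S" "d \<noteq> 0"
  shows "\<not> x extreme_point_of S"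
proof -
  have "midpoint (x - d) (x + d) = x"
    by (simp add: midpoint_def algebra_simps flip: scaleR_add_left)
  moreover have "(x + d) - (x - d) = 2 *\<^sub>R d"
    by (simp add: scaleR_2)
  then have "x - d \<noteq> x + d"
    using \<open>d \<noteq> 0\<close> by (metis diff_self scaleR_eq_0_iff zero_neq_numeral)
  ultimately have "x \<in> open_segment (x - d) (x + d)"
    by (metis midpoint_in_open_segment)
  then show ?thesis
    using assms by (auto simp: extreme_point_of_def)
qed

lemma eventually_in_halfspace_Inter_along_line:
  assumes "finite H" "v \<in> halfspace_Inter H"
    and "\<And>h. h \<in> tight_constraints H v \<Longrightarrow> fst h \<bullet> w = 0"
  shows "\<forall>\<^sub>F e in nhds 0. v + e *\<^sub>R w \<in> halfspace_Inter H"
proof -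
  have "\<forall>\<^sub>F e in nhds 0. fst h \<bullet> (v + e *\<^sub>R w) \<le> snd h" if h: "h \<in> H" for h
  proof (cases "h \<in> tight_constraints H v")
    case True
    then show ?thesis
      using assms(3) by (simp add: tight_constraints_def inner_add_right)
  next
    case False
    then have "fst h \<bullet> (v + 0 *\<^sub>R w) < snd h"
      using h assms(2) by (force simp: tight_constraints_def halfspace_Inter_def)
    moreover have "((\<lambda>e. fst h \<bullet> (v + e *\<^sub>R w)) \<longlongrightarrow> fst h \<bullet> (v + 0 *\<^sub>R w)) (nhds 0)"
      by (intro tendsto_intros filterlim_ident)
    ultimately have "\<forall>\<^sub>F e in nhds 0. fst h \<bullet> (v + e *\<^sub>R w) < snd h"
      using order_tendstoD(2) by blast
    then show ?thesis
      by eventually_elim simp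
  qed
  then show ?thesis
    using \<open>finite H\<close> by (simp add: halfspace_Inter_def eventually_ball_finite)
qed

lemma span_tight_normals_of_extreme_point:
  fixes H :: "('a::euclidean_space \<times> real) set"
  assumes "finite H" "v extreme_point_of halfspace_Inter H"
  shows "span (fst ` tight_constraints H v) = UNIV"
proof (rule ccontr)
  assume "span (fst ` tight_constraints H v) \<noteq> UNIV"
  then obtain w where "w \<noteq> 0" and w_orth: "\<And>x. x \<in> span (fst ` tight_constraints H v) \<Longrightarrow> w \<bullet> x = 0"
    using span_not_UNIV_orthogonal by blast
  have w: "fst h \<bullet> w = 0" if "h \<in> tight_constraints H v" for h
    using w_orth[of "fst h"] that by (simp add: span_base inner_commute)
  have "v \<in> halfspace_Inter H"
    using assms(2) by (simp add: extreme_point_of_def)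
  then obtain d where "d > 0" and d: "\<And>e. dist e 0 < d \<Longrightarrow> v + e *\<^sub>R w \<in> halfspace_Inter H"
    using eventually_in_halfspace_Inter_along_line[OF assms(1) _ w] by (auto simp: eventually_nhds_metric)
  have "v - (d/2) *\<^sub>R w \<in> halfspace_Inter H" "v + (d/2) *\<^sub>R w \<in> halfspace_Inter H"
    using d[of "d/2"] d[of "-d/2"] \<open>d > 0\<close> by simp_all
  then show False
    using not_extreme_point_of_symmetric_pair[of v "(d/2) *\<^sub>R w"] assms(2) \<open>d > 0\<close> \<open>w \<noteq> 0\<close>
    by simp
qed

lemma spanning_subset_of_card_DIM:
  fixes f :: "'b \<Rightarrow> 'a::euclidean_space"
  assumes "span (f ` A) = UNIV"
  obtains J where "J \<subseteq> A" "card J = DIM('a)" "span (f ` J) = UNIV"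
proof -
  obtain B where B: "B \<subseteq> f ` A" "independent B" "f ` A \<subseteq> span B" "card B = dim (f ` A)"
    using basis_exists by blast
  obtain J where J: "J \<subseteq> A" "inj_on f J" "B = f ` J"
    using B(1) subset_image_inj by metis
  have "UNIV \<subseteq> span B"
    using span_mono[OF B(3)] assms by (simp add: span_span)
  then have "span (f ` J) = UNIV"
    using J(3) by auto
  moreover have "dim (f ` A) = DIM('a)"
    using assms by (metis dim_UNIV dim_span)
  then have "card J = DIM('a)"
    using B(4) J(2,3) by (simp add: card_image)
  ultimately show thesis
    using J(1) that by blast
qed

lemma eq_if_inner_eq_on_spanning:
  fixes x y :: "'a::euclidean_space"
  assumes "span S = UNIV" "\<And>a. a \<in> S \<Longrightarrow> a \<bullet> x = a \<bullet> y"
  shows "x = y"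
proof -
  have "orthogonal (x - y) a" if "a \<in> S" for a
    using assms(2)[OF that] by (simp add: orthogonal_def inner_diff_right inner_commute)
  then have "orthogonal (x - y) (x - y)"
    using orthogonal_to_span assms(1) by blast
  then show ?thesis
    by (simp add: orthogonal_def)
qed

lemma card_vert_halfspace_Inter_le:
  fixes H :: "('a::euclidean_space \<times> real) set"
  assumes "finite H"
  shows "finite (vert (halfspace_Inter H)) \<and> card (vert (halfspace_Inter H)) \<le> card H choose DIM('a)"
proof -
  let ?V = "vert (halfspace_Inter H)" and ?Js = "{J. J \<subseteq> H \<and> card J = DIM('a)}"
  have ex_basis: "\<exists>J. J \<subseteq> tight_constraints H v \<and> card J = DIM('a) \<and> span (fst ` J) = UNIV" if "v \<in> ?V" for v
  proof -
    have "span (fst ` tight_constraints H v) = UNIV"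
      using span_tight_normals_of_extreme_point[OF assms] that by (simp add: vert_def)
    then obtain J where "J \<subseteq> tight_constraints H v" "card J = DIM('a)" "span (fst ` J) = UNIV"
      by (rule spanning_subset_of_card_DIM)
    then show ?thesis
      by blast
  qed
  then obtain basis where basis: "\<And>v. v \<in> ?V \<Longrightarrow>
      basis v \<subseteq> tight_constraints H v \<and> card (basis v) = DIM('a) \<and> span (fst ` basis v) = UNIV"
    using bchoice[of ?V] ex_basis by metis
  have "inj_on basis ?V"
  proof (rule inj_onI)
    fix v v' assume v: "v \<in> ?V" and v': "v' \<in> ?V" and eq: "basis v = basis v'"
    have "fst h \<bullet> v = fst h \<bullet> v'" if "h \<in> basis v" for h
    proof -
      have "h \<in> tight_constraints H v" "h \<in> tight_constraints H v'"
        using basis[OF v] basis[OF v'] that eq by blast+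
      then show ?thesis
        by (simp add: tight_constraints_def)
    qed
    then show "v = v'"
      using basis[OF v] by (intro eq_if_inner_eq_on_spanning[of "fst ` basis v"]) auto
  qed
  moreover have "basis ` ?V \<subseteq> ?Js"
    using basis by (auto simp: tight_constraints_def)
  moreover have "finite ?Js"
    using assms by simp
  ultimately have "finite ?V" "card ?V \<le> card ?Js"
    by (auto intro: card_inj_on_le finite_imageD[OF finite_subset])
  then show ?thesis
    using n_subsets[OF assms] by simp
qed

lemma facet_separating_outside_point:
  fixes S :: "'a::euclidean_space set"
  assumes "polytope S" "affine hull S = UNIV" "x \<notin> S"
  obtains G where "G facet_of S"
    "\<And>a b. S \<subseteq> {y. a \<bullet> y \<le> b} \<Longrightarrow> G = S \<inter> {y. a \<bullet> y = b} \<Longrightarrow> b < a \<bullet> x"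
proof -
  have poly: "polyhedron S"
    using assms(1) by (rule polytope_imp_polyhedron)
  have "S \<noteq> {}"
    using assms(2) by auto
  then obtain p where p: "p \<in> rel_interior S"
    using rel_interior_eq_empty polytope_imp_convex[OF assms(1)] by blast
  then have "p \<in> S" "x - p \<noteq> 0"
    using rel_interior_subset assms(3) by auto
  then obtain d where "0 < d" and y: "p + d *\<^sub>R (x - p) \<in> rel_frontier S"
      and d: "\<And>e. \<lbrakk>0 \<le> e; e < d\<rbrakk> \<Longrightarrow> p + e *\<^sub>R (x - p) \<in> rel_interior S"
    using ray_to_rel_frontier[OF polytope_imp_bounded[OF assms(1)] p, of "x - p"] assms(2) by auto
  have "d < 1"
  proof (rule ccontr)
    assume "\<not> d < 1"
    then have "x \<in> rel_interior S \<or> x \<in> rel_frontier S"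
      using d[of 1] y by (cases "d = 1") auto
    then show False
      using assms(3) rel_interior_subset polytope_imp_closed[OF assms(1)]
      by (auto simp: rel_frontier_def)
  qed
  obtain G where G: "G facet_of S" "p + d *\<^sub>R (x - p) \<in> G"
    using y rel_frontier_of_polyhedron[OF poly] by auto
  have "b < a \<bullet> x" if "S \<subseteq> {y. a \<bullet> y \<le> b}" "G = S \<inter> {y. a \<bullet> y = b}" for a b
  proof -
    have "p \<notin> G"
      using p G(1) unfolding rel_interior_of_polyhedron[OF poly] by blast
    then have "a \<bullet> p < b"
      using that \<open>p \<in> S\<close> by (metis (mono_tags, lifting) Int_iff less_eq_real_def mem_Collect_eq subsetD)
    moreover have "a \<bullet> p + d * (a \<bullet> x - a \<bullet> p) = b"
      using that G(2) by (auto simp: inner_add_right inner_diff_right)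
    moreover have "d * (b - a \<bullet> p) < b - a \<bullet> p"
      using \<open>d < 1\<close> \<open>a \<bullet> p < b\<close> by simp
    ultimately show ?thesis
      using \<open>0 < d\<close> by (smt (verit) mult_left_mono)
  qed
  then show thesis
    using G(1) that by blast
qed

lemma full_dim_polytope_eq_halfspace_Inter:
  fixes S :: "'a::euclidean_space set"
  assumes "polytope S" "affine hull S = UNIV"
  obtains H where "finite H" "card H \<le> card {G. G facet_of S}" "S = halfspace_Inter H"
proof -
  let ?Fs = "{G. G facet_of S}"
  have "\<exists>h. S \<subseteq> {y. fst h \<bullet> y \<le> snd h} \<and> G = S \<inter> {y. fst h \<bullet> y = snd h}" if "G \<in> ?Fs" for G
    using that facet_of_polyhedron[OF polytope_imp_polyhedron[OF assms(1)]]
    by (metis fst_conv snd_conv mem_Collect_eq)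
  then obtain f where f: "\<And>G. G \<in> ?Fs \<Longrightarrow>
      S \<subseteq> {y. fst (f G) \<bullet> y \<le> snd (f G)} \<and> G = S \<inter> {y. fst (f G) \<bullet> y = snd (f G)}"
    by metis
  have fin: "finite ?Fs"
    using assms(1) by (rule finite_polytope_facets)
  have "S = halfspace_Inter (f ` ?Fs)"
  proof
    show "S \<subseteq> halfspace_Inter (f ` ?Fs)"
      using f by (fastforce simp: halfspace_Inter_def)
    show "halfspace_Inter (f ` ?Fs) \<subseteq> S"
    proof
      fix x assume x: "x \<in> halfspace_Inter (f ` ?Fs)"
      show "x \<in> S"
      proof (rule ccontr)
        assume "x \<notin> S"
        then obtain G where "G facet_of S"
          and "\<And>a b. S \<subseteq> {y. a \<bullet> y \<le> b} \<Longrightarrow> G = S \<inter> {y. a \<bullet> y = b} \<Longrightarrow> b < a \<bullet> x"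
          using facet_separating_outside_point[OF assms] by blast
        then have "snd (f G) < fst (f G) \<bullet> x"
          using f by blast
        moreover have "fst (f G) \<bullet> x \<le> snd (f G)"
          using x \<open>G facet_of S\<close> by (simp add: halfspace_Inter_def)
        ultimately show False
          by simp
      qed
    qed
  qed
  moreover have "card (f ` ?Fs) \<le> card ?Fs"
    using fin by (rule card_image_le)
  ultimately show thesis
    using that fin by blast
qed

lemma card_facets_simplex_le:
  assumes "n simplex S"
  shows "int (card {G. G facet_of S}) \<le> n + 1"
proof -
  obtain C where C: "finite C" "\<not> affine_dependent C" "int (card C) = n + 1" "S = convex hull C"
    using assms unfolding simplex by blast
  have "{G. G facet_of S} \<subseteq> (\<lambda>u. convex hull (C - {u})) ` C"
    using facet_of_convex_hull_affine_independent[OF C(2)] C(4) by auto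
  then have "card {G. G facet_of S} \<le> card C"
    using C(1) by (meson card_image_le card_mono finite_imageI order_trans)
  then show ?thesis
    using C(3) by linarith
qed

lemma simplex_eq_halfspace_Inter:
  fixes T :: "'a::euclidean_space set"
  assumes "int DIM('a) simplex T"
  obtains H where "finite H" "card H \<le> DIM('a) + 1" "T = halfspace_Inter H"
proof -
  have "affine hull T = UNIV"
    using aff_dim_simplex[OF assms] by (simp add: aff_dim_eq_full)
  then obtain H where "finite H" "card H \<le> card {G. G facet_of T}" "T = halfspace_Inter H"
    using full_dim_polytope_eq_halfspace_Inter simplex_imp_polytope[OF assms] by blast
  moreover have "card {G. G facet_of T} \<le> DIM('a) + 1"
    using card_facets_simplex_le[OF assms] by linarith
  ultimately show thesis
    using that by simp
qed

lemma halfspace_Inter_Un: "halfspace_Inter (H \<union> H') = halfspace_Inter H \<inter> halfspace_Inter H'"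
  by (auto simp: halfspace_Inter_def)

theorem lemma5p3:
  fixes T T' :: "(real ^ 'n) set"
  assumes "int CARD('n) simplex T" and "int CARD('n) simplex T'"
  shows "finite (vert (T \<inter> T')) \<and>
         card (vert (T \<inter> T')) \<le> (2 * CARD('n) + 2) choose (CARD('n) + 2)"
proof -
  obtain H where H: "finite H" "card H \<le> CARD('n) + 1" "T = halfspace_Inter H"
    using simplex_eq_halfspace_Inter[of T] assms(1) by auto
  obtain H' where H': "finite H'" "card H' \<le> CARD('n) + 1" "T' = halfspace_Inter H'"
    using simplex_eq_halfspace_Inter[of T'] assms(2) by auto
  have "T \<inter> T' = halfspace_Inter (H \<union> H')"
    using H(3) H'(3) by (simp add: halfspace_Inter_Un)
  then have vert: "finite (vert (T \<inter> T')) \<and> card (vert (T \<inter> T')) \<le> card (H \<union> H') choose CARD('n)"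
    using card_vert_halfspace_Inter_le[of "H \<union> H'"] H(1) H'(1) by simp
  have "card (H \<union> H') \<le> 2 * CARD('n) + 2"
    using card_Un_le[of H H'] H(2) H'(2) by linarith
  then have "card (H \<union> H') choose CARD('n) \<le> (2 * CARD('n) + 2) choose CARD('n)"
    by (rule binomial_right_mono)
  also have "\<dots> = (2 * CARD('n) + 2) choose (CARD('n) + 2)"
    using binomial_symmetric[of "CARD('n)" "2 * CARD('n) + 2"] by simp
  finally show ?thesis
    using vert by simp
qed

end
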